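(* For all $t>0$ and $z\in\mathbb{C}$, $$|R(t,z)|\le 2\Lambda\Big(-\frac{\sqrt t}{\sqrt2}\Big)e^{|\mathrm{Re}(z)|}.$$
   Context: $\Lambda(z):=e^{z^2}(1-\mathrm{erf}(z))$ for $z\in\mathbb{C}$; $R(t,z):=e^z\Lambda\big(\frac{z}{2\sqrt{it}}-\sqrt{it}\big)-e^{-z}\Lambda\big(\frac{z}{2\sqrt{it}}+\sqrt{it}\big)$ for $t>0$, $z\in\mathbb{C}$, with principal square roots ($\sqrt{i}=e^{i\pi/4}$). *)

theory Defs
  imports "HOL-Complex_Analysis.Complex_Analysis"
begin

text \<open>Complex error function: erf z = 2/sqrt pi * integral of exp(-w^2) along the segment from 0 to z
  (the entire function; the integral is path independent).\<close>
definition cerf :: "complex \<Rightarrow> complex" where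
  "cerf z = (2 / complex_of_real (sqrt pi)) * contour_integral (linepath 0 z) (\<lambda>w. exp (- (w ^ 2)))"

definition Lam :: "complex \<Rightarrow> complex" where
  "Lam z = exp (z ^ 2) * (1 - cerf z)"

definition RR :: "real \<Rightarrow> complex \<Rightarrow> complex" where
  "RR t z = exp z * Lam (z / (2 * csqrt (\<i> * of_real t)) - csqrt (\<i> * of_real t))
          - exp (- z) * Lam (z / (2 * csqrt (\<i> * of_real t)) + csqrt (\<i> * of_real t))"

end

theory Submission
  imports Defs
begin

text \<open>With a = sqrt(i t) and w = z/(2a) we have e^z e^((w-a)^2) = e^(-z) e^((w+a)^2) = e^(w^2+a^2),
  so the two terms of R(t,z) combine into (2/sqrt pi) e^(w^2+a^2) times the integral of e^(-u^2)
  over the segment [w-a, w+a]. On that segment u = w + v a with |v| \<le> 1, and because a^2 is purely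
  imaginary, |e^(w^2+a^2-u^2)| = e^(-v Re z) \<le> e^|Re z|. The segment has length 2 sqrt t, so
  |R(t,z)| \<le> (4 sqrt t / sqrt pi) e^|Re z|. Finally 2 sqrt t / sqrt pi \<le> 1 + t/2 \<le> e^(t/2), and
  e^(x^2) \<le> \<Lambda>(-x) for real x > 0 since erf(-x) \<le> 0.\<close>

lemma contour_integral_linepath_split_triangle:
  fixes f :: "complex \<Rightarrow> complex"
  assumes "f holomorphic_on convex hull {r, p, q}"
  shows "contour_integral (linepath p q) f =
         contour_integral (linepath r q) f - contour_integral (linepath r p) f"
proof -
  have cont: "continuous_on (closed_segment q r) f"
    using assms by (rule holomorphic_on_imp_continuous_on[THEN continuous_on_subset])
      (simp add: segment_convex_hull hull_mono)
  have "(f has_contour_integral 0) (linepath r p +++ linepath p q +++ linepath q r)"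
    using assms by (rule Cauchy_theorem_triangle)
  then have "contour_integral (linepath r p) f + contour_integral (linepath p q) f
               + contour_integral (linepath q r) f = 0"
    by (rule has_chain_integral_chain_integral3)
  moreover have "contour_integral (linepath q r) f = - contour_integral (linepath r q) f"
    using cont by (rule contour_integral_reverse_linepath)
  ultimately show ?thesis
    by (simp add: algebra_simps eq_neg_iff_add_eq_0)
qed

lemma cerf_diff:
  "cerf q - cerf p =
     2 / complex_of_real (sqrt pi) * contour_integral (linepath p q) (\<lambda>u. exp (- (u ^ 2)))"
proof -
  have split: "contour_integral (linepath p q) (\<lambda>u. exp (- (u ^ 2))) =
        contour_integral (linepath 0 q) (\<lambda>u. exp (- (u ^ 2)))
          - contour_integral (linepath 0 p) (\<lambda>u. exp (- (u ^ 2)))"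
    by (rule contour_integral_linepath_split_triangle) (intro holomorphic_intros)
  show ?thesis
    by (simp only: cerf_def split right_diff_distrib)
qed

lemma cerf_neg_of_real:
  assumes "x > 0"
  obtains J where "J \<ge> 0" and "cerf (- complex_of_real x) = - complex_of_real J"
proof -
  let ?f = "\<lambda>u::complex. exp (- (u ^ 2))"
  have "(\<lambda>s. exp (- (s ^ 2))) integrable_on {-x..0}"
    by (intro integrable_continuous_interval continuous_intros)
  then obtain J where J: "((\<lambda>s. exp (- (s ^ 2))) has_integral J) {-x..0}"
    by blast
  then have "((\<lambda>s. complex_of_real (exp (- (s ^ 2)))) has_integral of_real J) {-x..0}"
    by (rule has_integral_of_real)
  then have "((\<lambda>s. ?f (of_real s)) has_integral of_real J) {Re (- of_real x)..Re 0}"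
    by (simp flip: exp_of_real)
  then have "(?f has_contour_integral of_real J) (linepath (- of_real x) 0)"
    using assms by (subst has_contour_integral_linepath_Reals_iff) auto
  then have "cerf 0 - cerf (- of_real x) = 2 / complex_of_real (sqrt pi) * of_real J"
    by (simp add: cerf_diff contour_integral_unique)
  moreover have "cerf 0 = 0"
    by (simp add: cerf_def)
  ultimately have "cerf (- of_real x) = - (2 / complex_of_real (sqrt pi) * of_real J)"
    by (metis diff_0 minus_minus)
  then have "cerf (- of_real x) = - complex_of_real (2 / sqrt pi * J)"
    by simp
  moreover have "2 / sqrt pi * J \<ge> 0"
    using has_integral_nonneg[OF J] by simp
  ultimately show thesis
    using that by blast
qed

lemma exp_sq_le_norm_Lam_neg_of_real:
  assumes "x > 0"
  shows "exp (x ^ 2) \<le> cmod (Lam (- complex_of_real x))"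
proof -
  obtain J where J: "J \<ge> 0" "cerf (- complex_of_real x) = - complex_of_real J"
    using cerf_neg_of_real[OF assms] .
  have "Lam (- complex_of_real x) = of_real (exp (x ^ 2) * (1 + J))"
    unfolding Lam_def J(2) by (simp flip: exp_of_real)
  then have "cmod (Lam (- complex_of_real x)) = exp (x ^ 2) * (1 + J)"
    using J(1) by (simp only: norm_of_real) simp
  then show ?thesis
    using J(1) by simp
qed

lemma exp_mult_Lam_diff_eq_contour_integral:
  assumes "z = 2 * a * w"
  shows "exp z * Lam (w - a) - exp (- z) * Lam (w + a) =
         2 / complex_of_real (sqrt pi) * exp (w ^ 2 + a ^ 2)
           * contour_integral (linepath (w - a) (w + a)) (\<lambda>u. exp (- (u ^ 2)))"
proof -
  have "exp z * exp ((w - a) ^ 2) = exp (w ^ 2 + a ^ 2)"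
       "exp (- z) * exp ((w + a) ^ 2) = exp (w ^ 2 + a ^ 2)"
    by (simp_all add: assms power2_eq_square algebra_simps flip: exp_add)
  then have "exp z * Lam (w - a) - exp (- z) * Lam (w + a)
               = exp (w ^ 2 + a ^ 2) * (1 - cerf (w - a)) - exp (w ^ 2 + a ^ 2) * (1 - cerf (w + a))"
    unfolding Lam_def by (simp only: mult.assoc[symmetric])
  also have "\<dots> = exp (w ^ 2 + a ^ 2) * (cerf (w + a) - cerf (w - a))"
    by (simp add: algebra_simps)
  finally show ?thesis
    by (simp add: cerf_diff)
qed

lemma norm_exp_sq_diff_on_segment_le:
  assumes "Re (a ^ 2) = 0" and "u \<in> closed_segment (w - a) (w + a)"
  shows "cmod (exp (w ^ 2 + a ^ 2 - u ^ 2)) \<le> exp \<bar>Re (2 * a * w)\<bar>"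
proof -
  obtain s where s: "0 \<le> s" "s \<le> 1" and u: "u = (1 - s) *\<^sub>R (w - a) + s *\<^sub>R (w + a)"
    using assms(2) unfolding closed_segment_def by blast
  define v where "v = 2 * s - 1"
  have v: "\<bar>v\<bar> \<le> 1"
    using s unfolding v_def by auto
  have "w ^ 2 + a ^ 2 - u ^ 2 = - (2 * a * w) * of_real v + a ^ 2 * of_real (1 - v ^ 2)"
    unfolding u v_def by (simp add: scaleR_conv_of_real power2_eq_square algebra_simps)
  then have "cmod (exp (w ^ 2 + a ^ 2 - u ^ 2))
               = exp (Re (- (2 * a * w) * of_real v + a ^ 2 * of_real (1 - v ^ 2)))"
    by (simp only: norm_exp_eq_Re)
  also have "\<dots> = exp (- Re (2 * a * w) * v)"
    using assms(1) by (simp add: algebra_simps)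
  also have "\<dots> \<le> exp \<bar>Re (2 * a * w)\<bar>"
  proof -
    have "- r * v \<le> \<bar>r\<bar>" for r :: real
    proof -
      have "- r * v \<le> \<bar>r\<bar> * \<bar>v\<bar>"
        by (metis abs_ge_minus_self abs_mult minus_mult_left)
      also have "\<dots> \<le> \<bar>r\<bar>"
        using v by (simp add: mult_left_le)
      finally show ?thesis .
    qed
    from this[of "Re (2 * a * w)"] show ?thesis
      by (simp only: exp_le_cancel_iff)
  qed
  finally show ?thesis .
qed

lemma norm_exp_mult_gaussian_integral_le:
  assumes "Re (a ^ 2) = 0"
  shows "cmod (exp (w ^ 2 + a ^ 2) * contour_integral (linepath (w - a) (w + a)) (\<lambda>u. exp (- (u ^ 2))))
           \<le> exp \<bar>Re (2 * a * w)\<bar> * (2 * cmod a)"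
proof -
  let ?I = "contour_integral (linepath (w - a) (w + a)) (\<lambda>u. exp (- (u ^ 2)))"
  have "((\<lambda>u. exp (w ^ 2 + a ^ 2) * exp (- (u ^ 2))) has_contour_integral exp (w ^ 2 + a ^ 2) * ?I)
          (linepath (w - a) (w + a))"
    by (intro has_contour_integral_lmul has_contour_integral_integral
          contour_integrable_continuous_linepath continuous_intros)
  moreover have "cmod (exp (w ^ 2 + a ^ 2) * exp (- (u ^ 2))) \<le> exp \<bar>Re (2 * a * w)\<bar>"
    if "u \<in> closed_segment (w - a) (w + a)" for u
    using norm_exp_sq_diff_on_segment_le[OF assms that] by (simp add: exp_diff exp_minus field_simps)
  ultimately have "cmod (exp (w ^ 2 + a ^ 2) * ?I) \<le> exp \<bar>Re (2 * a * w)\<bar> * cmod ((w + a) - (w - a))"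
    by (intro has_contour_integral_bound_linepath) auto
  then show ?thesis
    by (simp add: norm_mult)
qed

lemma two_sqrt_div_sqrt_pi_le_exp:
  assumes "t \<ge> 0"
  shows "2 * sqrt t / sqrt pi \<le> exp ((sqrt t / sqrt 2) ^ 2)"
proof -
  define x where "x = sqrt t / sqrt 2"
  have x: "x \<ge> 0" "sqrt t = sqrt 2 * x"
    unfolding x_def using assms by simp_all
  have "sqrt 2 / sqrt pi \<le> 1"
    using pi_gt3 by simp
  then have "2 * x * (sqrt 2 / sqrt pi) \<le> 2 * x"
    using mult_left_mono[of "sqrt 2 / sqrt pi" 1 "2 * x"] x(1) by simp
  then have "2 * sqrt t / sqrt pi \<le> 2 * x"
    by (simp add: x(2) ac_simps)
  also have "\<dots> \<le> 1 + x ^ 2"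
  proof -
    have "0 \<le> (x - 1) ^ 2"
      by simp
    then show ?thesis
      by (simp add: power2_eq_square algebra_simps)
  qed
  also have "\<dots> \<le> exp (x ^ 2)"
    by (rule exp_ge_add_one_self)
  finally show ?thesis
    unfolding x_def .
qed

lemma norm_RR_le:
  assumes "t > 0"
  shows "cmod (RR t z) \<le> 2 * (2 * sqrt t / sqrt pi) * exp \<bar>Re z\<bar>"
proof -
  define a where "a = csqrt (\<i> * of_real t)"
  define w where "w = z / (2 * a)"
  let ?E = "exp (w ^ 2 + a ^ 2) * contour_integral (linepath (w - a) (w + a)) (\<lambda>u. exp (- (u ^ 2)))"
  have a2: "a ^ 2 = \<i> * of_real t"
    unfolding a_def by simp
  have "a \<noteq> 0"
    using a2 assms by auto
  then have z: "z = 2 * a * w"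
    unfolding w_def by simp
  have "cmod a = sqrt t"
    unfolding a_def using assms by (simp add: norm_mult)
  then have bound: "cmod ?E \<le> exp \<bar>Re z\<bar> * (2 * sqrt t)"
    using norm_exp_mult_gaussian_integral_le[of a w] a2 z by simp
  have "RR t z = 2 / complex_of_real (sqrt pi) * ?E"
    unfolding RR_def a_def[symmetric] w_def[symmetric]
      exp_mult_Lam_diff_eq_contour_integral[OF z] by (simp only: mult.assoc)
  then have "cmod (RR t z) = 2 / sqrt pi * cmod ?E"
    by (simp add: norm_mult norm_divide)
  also have "\<dots> \<le> 2 / sqrt pi * (exp \<bar>Re z\<bar> * (2 * sqrt t))"
    by (rule mult_left_mono[OF bound]) simp
  finally show ?thesis
    by (simp add: ac_simps)
qed

theorem mainTheorem13:
  fixes t :: real and z :: complex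
  assumes "t > 0"
  shows "cmod (RR t z) \<le> 2 * cmod (Lam (- complex_of_real (sqrt t / sqrt 2))) * exp \<bar>Re z\<bar>"
proof -
  have "2 * sqrt t / sqrt pi \<le> cmod (Lam (- complex_of_real (sqrt t / sqrt 2)))"
    using assms by (intro order.trans[OF two_sqrt_div_sqrt_pi_le_exp
                                         exp_sq_le_norm_Lam_neg_of_real]) simp_all
  then have "2 * (2 * sqrt t / sqrt pi) * exp \<bar>Re z\<bar>
               \<le> 2 * cmod (Lam (- complex_of_real (sqrt t / sqrt 2))) * exp \<bar>Re z\<bar>"
    by (intro mult_right_mono mult_left_mono) auto
  with norm_RR_le[OF assms] show ?thesis
    by (rule order.trans)
qed

end
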